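(* Let $q$ be a prime power, $S \subset \mathbb{F}_q^n$, $0 < \sigma < \tau$, and let $3 \le k \le n$ be an integer such that $E_{k-2}(S) \geq q$. Let $T \in \mathcal{L}_k(\mathbb{F}_q^n)$ be $\tau$-unbalanced with respect to $S$, and let $R$ be chosen uniformly at random from the set of $(k-2)$-flats contained in $T$. Then $$\Pr[R \text{ is } \sigma\text{-unbalanced with respect to } S] \geq 1 - \frac{1+\tau}{(\tau-\sigma)^2 q}.$$
   Context: $\mathcal{L}_j(\mathbb{F}_q^n)$ denotes the set of $j$-dimensional affine subspaces ($j$-flats) of $\mathbb{F}_q^n$. For $S \subset \mathbb{F}_q^n$, $E_j(S) = |S|/q^{n-j}$. A flat $R \in \mathcal{L}_j(\mathbb{F}_q^n)$ is $\sigma$-balanced with respect to $S$ if $\big||R \cap S| - E_j(S)\big| \leq \sigma E_j(S)$, and $\sigma$-unbalanced otherwise. *)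

theory Defs
  imports "HOL-Analysis.Analysis"
begin

text \<open>Vectors of F_q^n are modelled as 'a ^ 'n with 'a a finite field (so q = CARD('a),
  automatically a prime power) and n = CARD('n).\<close>

definition flats :: "nat \<Rightarrow> ('a::field ^ 'n) set set" where
  "flats j = {A. \<exists>a V. vec.subspace V \<and> vec.dim V = j \<and> A = (\<lambda>v. a + v) ` V}"

definition expected :: "nat \<Rightarrow> ('a::{finite,field} ^ 'n) set \<Rightarrow> real" where
  "expected j S = real (card S) / real CARD('a) ^ (CARD('n) - j)"

definition balanced :: "real \<Rightarrow> ('a::{finite,field} ^ 'n) set \<Rightarrow> nat \<Rightarrow> ('a ^ 'n) set \<Rightarrow> bool" where
  "balanced \<sigma> S j R \<longleftrightarrow> \<bar>real (card (R \<inter> S)) - expected j S\<bar> \<le> \<sigma> * expected j S"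

end

theory Submission
  imports Defs
begin

text \<open>The (k-2)-flats inside a k-flat T form a 2-design on the points of T: affine maps preserving T
  act transitively on its points and on its pairs of distinct points (transvections suffice), so
  every point and every pair of distinct points lies in the same number of them. Double counting
  then shows that |R \<inter> S| has mean \<mu> = |T \<inter> S| / q^2 and variance at most \<mu> over these R. As T
  is \<tau>-unbalanced, \<mu> is far from E = E_{k-2}(S), every \<sigma>-balanced R deviates from \<mu> by at least
  |\<mu> - E| - \<sigma> E, and Chebyshev's inequality together with E \<ge> q bounds the proportion of such R.\<close>

locale two_design =
  fixes T :: "'a set" and F :: "'a set set" and k r l :: nat
  assumes two_le_card_points: "2 \<le> card T"
    and block_subset: "R \<in> F \<Longrightarrow> R \<subseteq> T"
    and card_block: "R \<in> F \<Longrightarrow> card R = k"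
    and replication: "x \<in> T \<Longrightarrow> card {R \<in> F. x \<in> R} = r"
    and pair_replication: "x \<in> T \<Longrightarrow> y \<in> T \<Longrightarrow> x \<noteq> y \<Longrightarrow> card {R \<in> F. x \<in> R \<and> y \<in> R} = l"
begin

lemma finite_points: "finite T"
  using two_le_card_points card.infinite by fastforce

lemma finite_blocks: "finite F"
  using finite_points block_subset by (intro finite_subset[of F "Pow T"]) auto

lemma points_of_block: "R \<in> F \<Longrightarrow> {x \<in> T. x \<in> R} = R"
  using block_subset by auto

lemma card_blocks_mult: "card F * k = r * card T"
proof -
  have "(\<Sum>R\<in>F. card {x \<in> T. x \<in> R}) = r * card T"
    using finite_blocks finite_points replication by (intro sum_multicount) auto
  then show ?thesis using points_of_block card_block by simp
qed

lemma pair_replication_mult_le: "l * card T \<le> r * k"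
proof -
  obtain x y where xy: "x \<in> T" "y \<in> T" "x \<noteq> y"
    using two_le_card_points finite_points card_le_Suc0_iff_eq[of T] by auto
  have "card {R \<in> F. x \<in> R \<and> y \<in> R} \<le> card {R \<in> F. x \<in> R}"
    using finite_blocks by (intro card_mono) auto
  then have "l \<le> r" using pair_replication[OF xy] replication[OF xy(1)] by simp
  \<comment> \<open>count the pairs (z, R) with x, z \<in> R \<in> F\<close>
  moreover have "r + (card T - 1) * l = r * k"
  proof -
    have "(\<Sum>z\<in>T. card {R \<in> {R \<in> F. x \<in> R}. z \<in> R}) = (\<Sum>R\<in>{R \<in> F. x \<in> R}. k)"
      using finite_points finite_blocks points_of_block card_block by (intro sum_multicount_gen) auto
    moreover have "(\<Sum>z\<in>T. card {R \<in> {R \<in> F. x \<in> R}. z \<in> R})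
        = card {R \<in> F. x \<in> R} + (\<Sum>z\<in>T - {x}. card {R \<in> F. x \<in> R \<and> z \<in> R})"
      using finite_points xy by (simp add: sum.remove[of T x] conj_ac)
    moreover have "(\<Sum>z\<in>T - {x}. card {R \<in> F. x \<in> R \<and> z \<in> R}) = (\<Sum>z\<in>T - {x}. l)"
      using pair_replication[OF xy(1)] by (intro sum.cong) auto
    ultimately show ?thesis
      using replication[OF xy(1)] finite_points xy(1) by (simp add: card_Diff_singleton)
  qed
  moreover have "l * card T = (card T - 1) * l + l"
    using two_le_card_points by (cases "card T") auto
  ultimately show ?thesis by linarith
qed

lemma sum_card_Int:
  assumes "S \<subseteq> T"
  shows "(\<Sum>R\<in>F. card (R \<inter> S)) = r * card S"
proof -
  have "(\<Sum>R\<in>F. card {x \<in> S. x \<in> R}) = r * card S"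
    using finite_blocks finite_subset[OF assms finite_points] replication assms
    by (intro sum_multicount) auto
  moreover have "R \<inter> S = {x \<in> S. x \<in> R}" for R by auto
  ultimately show ?thesis by simp
qed

lemma sum_card_Int_sq_le:
  assumes "S \<subseteq> T"
  shows "(\<Sum>R\<in>F. card (R \<inter> S) ^ 2) \<le> card S * card S * l + card S * r"
proof -
  have S: "finite S" using finite_subset[OF assms finite_points] .
  have "(\<Sum>R\<in>F. card {p \<in> S \<times> S. fst p \<in> R \<and> snd p \<in> R})
      = (\<Sum>p\<in>S \<times> S. card {R \<in> F. fst p \<in> R \<and> snd p \<in> R})"
    using finite_blocks S by (intro sum_multicount_gen) auto
  moreover have "{p \<in> S \<times> S. fst p \<in> R \<and> snd p \<in> R} = (R \<inter> S) \<times> (R \<inter> S)" for R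
    by auto
  ultimately have "(\<Sum>R\<in>F. card (R \<inter> S) ^ 2) = (\<Sum>p\<in>S \<times> S. card {R \<in> F. fst p \<in> R \<and> snd p \<in> R})"
    by (simp add: card_cartesian_product power2_eq_square)
  also have "\<dots> \<le> (\<Sum>p\<in>S \<times> S. l + (if fst p = snd p then r else 0))"
    using replication pair_replication assms by (intro sum_mono) (auto simp: subset_iff)
  also have "\<dots> = card S * card S * l + card S * r"
  proof -
    have "S \<times> S \<inter> {p. fst p = snd p} = (\<lambda>x. (x, x)) ` S" by auto
    then have "card (S \<times> S \<inter> {p. fst p = snd p}) = card S" by (simp add: card_image inj_on_def)
    then show ?thesis using S by (simp add: sum.distrib sum.If_cases card_cartesian_product)
  qed
  finally show ?thesis .
qed

text \<open>Two points of S lie in at most as many common blocks as independent sampling would predict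
  (l |T| \<le> r k), which makes the variance of |R \<inter> S| at most its mean.\<close>
lemma intersection_variance_le:
  assumes "S \<subseteq> T"
  shows "(\<Sum>R\<in>F. (real (card (R \<inter> S)) - real (card S) * k / card T)\<^sup>2)
    \<le> card F * (real (card S) * k / card T)"
proof -
  define X where "X R = real (card (R \<inter> S))" for R
  define \<mu> where "\<mu> = real (card S) * k / card T"
  have T: "real (card T) > 0" using two_le_card_points by simp
  have mean: "card F * \<mu> = real (card S) * r"
  proof -
    have "card F * \<mu> = card S * real (card F * k) / card T" unfolding \<mu>_def by simp
    also have "\<dots> = real (card S) * r" using T by (simp only: card_blocks_mult) simp
    finally show ?thesis .
  qed
  have "card S * card S * l = card S * card S * real (l * card T) / card T" using T by simp
  also have "\<dots> \<le> card S * card S * real (r * k) / card T"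
    using pair_replication_mult_le T by (intro divide_right_mono mult_left_mono of_nat_mono) simp_all
  also have "\<dots> = \<mu> * (card S * r)" unfolding \<mu>_def by simp
  finally have pairs: "card S * card S * l \<le> \<mu> * (card S * r)" .
  have "(\<Sum>R\<in>F. (X R - \<mu>)\<^sup>2) = (\<Sum>R\<in>F. X R ^ 2 - 2 * \<mu> * X R + \<mu>\<^sup>2)"
    by (intro sum.cong) (simp_all add: power2_diff)
  also have "\<dots> = (\<Sum>R\<in>F. X R ^ 2) - 2 * \<mu> * (\<Sum>R\<in>F. X R) + card F * \<mu>\<^sup>2"
    by (simp add: sum.distrib sum_subtractf sum_distrib_left)
  also have "\<dots> = (\<Sum>R\<in>F. X R ^ 2) - \<mu> * (card S * r)"
    using sum_card_Int[OF assms] mean unfolding X_def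
    by (simp add: power2_eq_square flip: of_nat_sum)
  also have "\<dots> \<le> real (card S) * r"
  proof -
    have "real (\<Sum>R\<in>F. card (R \<inter> S) ^ 2) \<le> real (card S * card S * l + card S * r)"
      using sum_card_Int_sq_le[OF assms] by (rule of_nat_mono)
    then have "(\<Sum>R\<in>F. X R ^ 2) \<le> card S * card S * l + card S * r"
      unfolding X_def by simp
    then show ?thesis using pairs unfolding of_nat_mult of_nat_add by linarith
  qed
  finally show ?thesis using mean unfolding X_def \<mu>_def by simp
qed

end

lemma card_mult_sq_le_sum_sq_deviation:
  fixes X :: "'b \<Rightarrow> real" and \<delta> \<mu> :: real
  assumes "finite F" "B \<subseteq> F" "0 \<le> \<delta>" "\<And>R. R \<in> B \<Longrightarrow> \<delta> \<le> \<bar>X R - \<mu>\<bar>"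
  shows "card B * \<delta>\<^sup>2 \<le> (\<Sum>R\<in>F. (X R - \<mu>)\<^sup>2)"
proof -
  have "card B * \<delta>\<^sup>2 = (\<Sum>R\<in>B. \<delta>\<^sup>2)" by simp
  also have "\<dots> \<le> (\<Sum>R\<in>B. (X R - \<mu>)\<^sup>2)"
  proof (rule sum_mono)
    fix R assume "R \<in> B"
    then have "\<delta>\<^sup>2 \<le> \<bar>X R - \<mu>\<bar>\<^sup>2" using assms(3,4) by (intro power_mono) auto
    then show "\<delta>\<^sup>2 \<le> (X R - \<mu>)\<^sup>2" by simp
  qed
  also have "\<dots> \<le> (\<Sum>R\<in>F. (X R - \<mu>)\<^sup>2)"
    using assms(1,2) by (intro sum_mono2) auto
  finally show ?thesis .
qed

lemma unbalanced_mean_deviation: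
  fixes q E \<mu> \<sigma> \<tau> :: real
  assumes "0 < q" "q \<le> E" "0 \<le> \<sigma>" "\<sigma> < \<tau>" "0 \<le> \<mu>" "\<tau> * E < \<bar>\<mu> - E\<bar>"
  shows "\<mu> * (\<tau> - \<sigma>)\<^sup>2 * q \<le> (1 + \<tau>) * (\<bar>\<mu> - E\<bar> - \<sigma> * E)\<^sup>2"
proof -
  define s u where "s = \<tau> - \<sigma>" and "u = \<bar>\<mu> - E\<bar> - \<sigma> * E"
  have "0 < s" "0 < E" using assms by (auto simp: s_def)
  have "s * E < u" using assms(6) by (simp add: s_def u_def algebra_simps)
  moreover have "0 < s * E" using \<open>0 < s\<close> \<open>0 < E\<close> by simp
  ultimately have "s * E \<le> u" "0 \<le> u" by linarith+
  then have "(s * E)\<^sup>2 \<le> u\<^sup>2" using \<open>0 < s\<close> \<open>0 < E\<close> by (intro power_mono) simp_all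
  have "\<mu> * s\<^sup>2 * q \<le> \<mu> * s\<^sup>2 * E"
    using assms(2,5) by (intro mult_left_mono) auto
  also have "\<dots> \<le> (1 + \<tau>) * u\<^sup>2"
  proof (cases "\<mu> \<le> E")
    case True
    then have "\<mu> * s\<^sup>2 * E \<le> E * s\<^sup>2 * E"
      using \<open>0 < E\<close> by (intro mult_right_mono) auto
    also have "\<dots> = (s * E)\<^sup>2" by (simp add: power2_eq_square)
    also have "\<dots> \<le> (1 + \<tau>) * u\<^sup>2"
    proof -
      have "1 * u\<^sup>2 \<le> (1 + \<tau>) * u\<^sup>2" using assms(3,4) by (intro mult_right_mono) auto
      then show ?thesis using \<open>(s * E)\<^sup>2 \<le> u\<^sup>2\<close> by simp
    qed
    finally show ?thesis .
  next
    case False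
    then have "\<mu> = (1 + \<sigma>) * E + u" by (simp add: u_def algebra_simps)
    then have "\<mu> * s\<^sup>2 * E = (1 + \<sigma>) * (s * E)\<^sup>2 + s * (s * E) * u"
      by (simp add: power2_eq_square algebra_simps)
    also have "\<dots> \<le> (1 + \<sigma>) * u\<^sup>2 + s * u * u"
    proof (rule add_mono)
      show "(1 + \<sigma>) * (s * E)\<^sup>2 \<le> (1 + \<sigma>) * u\<^sup>2"
        using \<open>(s * E)\<^sup>2 \<le> u\<^sup>2\<close> assms(3) by (intro mult_left_mono) simp_all
      show "s * (s * E) * u \<le> s * u * u"
        using \<open>s * E \<le> u\<close> \<open>0 \<le> u\<close> \<open>0 < s\<close> by (intro mult_right_mono mult_left_mono) simp_all
    qed
    also have "\<dots> = (1 + \<tau>) * u\<^sup>2" by (simp add: s_def power2_eq_square algebra_simps)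
    finally show ?thesis .
  qed
  finally show ?thesis unfolding s_def u_def .
qed

lemma card_span_insert:
  fixes B :: "('a::{finite,field} ^ 'n) set"
  assumes b: "b \<notin> vec.span B"
  shows "card (vec.span (insert b B)) = CARD('a) * card (vec.span B)"
proof -
  define g where "g = (\<lambda>(c, y). c *s b + y)"
  have span_eq: "vec.span (insert b B) = g ` (UNIV \<times> vec.span B)"
  proof
    show "vec.span (insert b B) \<subseteq> g ` (UNIV \<times> vec.span B)"
    proof
      fix x assume "x \<in> vec.span (insert b B)"
      then obtain c where "x - c *s b \<in> vec.span B" using vec.span_insert by blast
      then show "x \<in> g ` (UNIV \<times> vec.span B)"
        unfolding g_def by (intro image_eqI[where x = "(c, x - c *s b)"]) auto
    qed
    show "g ` (UNIV \<times> vec.span B) \<subseteq> vec.span (insert b B)"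
      unfolding g_def
      by (auto intro!: vec.span_add vec.span_scale simp: vec.span_base)
        (meson subsetD subset_insertI vec.span_mono)
  qed
  have "inj_on g (UNIV \<times> vec.span B)"
  proof (rule inj_onI, clarsimp simp: g_def)
    fix c y c' y'
    assume y: "y \<in> vec.span B" "y' \<in> vec.span B" and eq: "c *s b + y = c' *s b + y'"
    have "c = c'"
    proof (rule ccontr)
      assume "c \<noteq> c'"
      have "(c - c') *s b = y' - y"
        using eq by (simp add: algebra_simps vector_sadd_rdistrib)
      moreover have "(1 / (c - c')) * (c - c') = 1" using \<open>c \<noteq> c'\<close> by simp
      then have "b = (1 / (c - c')) *s ((c - c') *s b)"
        by (metis vector_smult_assoc vector_smult_lid)
      ultimately have "b = (1 / (c - c')) *s (y' - y)" by simp
      then show False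
        using b y by (simp add: vec.span_scale vec.span_diff)
    qed
    then show "c = c' \<and> y = y'" using eq by simp
  qed
  then show ?thesis
    unfolding span_eq by (simp add: card_image card_cartesian_product)
qed

lemma card_span_independent:
  fixes B :: "('a::{finite,field} ^ 'n) set"
  assumes "vec.independent B"
  shows "card (vec.span B) = CARD('a) ^ card B"
proof -
  have "finite B" by simp
  then show ?thesis using assms
  proof (induction B rule: finite_induct)
    case empty
    then show ?case by simp
  next
    case (insert b B)
    then have "vec.independent B" "b \<notin> vec.span B"
      using vec.independent_insert[of b B] by auto
    then show ?case using insert.IH insert.hyps card_span_insert[of b B] by simp
  qed
qed

lemma card_subspace:
  fixes V :: "('a::{finite,field} ^ 'n) set"
  assumes "vec.subspace V"
  shows "card V = CARD('a) ^ vec.dim V"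
  by (metis assms card_span_independent vec.basis_subspace_exists)

lemma card_flats:
  fixes R :: "('a::{finite,field} ^ 'n) set"
  assumes "R \<in> flats j"
  shows "card R = CARD('a) ^ j"
proof -
  obtain a V where "vec.subspace V" "vec.dim V = j" "R = (\<lambda>v. a + v) ` V"
    using assms unfolding flats_def by auto
  then show ?thesis
    using card_subspace[of V] by (simp add: card_image)
qed

lemma flats_affine_image:
  fixes f :: "'a::field ^ 'n \<Rightarrow> 'a ^ 'n"
  assumes f: "Vector_Spaces.linear (*s) (*s) f" "inj f" and R: "R \<in> flats j"
  shows "(\<lambda>z. c + f z) ` R \<in> flats j"
proof -
  obtain b U where U: "vec.subspace U" "vec.dim U = j" "R = (\<lambda>v. b + v) ` U"
    using R unfolding flats_def by auto
  have "(\<lambda>z. c + f z) ` R = (\<lambda>v. (c + f b) + v) ` (f ` U)"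
    using U(3) by (auto simp: image_image vec.linear_add[OF f(1)] add.assoc)
  moreover have "vec.subspace (f ` U)" using vec.linear_subspace_image[OF f(1) U(1)] .
  moreover have "vec.dim (f ` U) = j"
    using vec.dim_image_eq[OF f(1), of U] f(2) U(2) by (simp add: inj_on_subset)
  ultimately show ?thesis unfolding flats_def by blast
qed

lemma translation_mem_iff:
  fixes a :: "'a::ab_group_add"
  shows "z \<in> (\<lambda>v. a + v) ` W \<longleftrightarrow> z - a \<in> W"
  by (metis diff_add_cancel add_diff_cancel_left' imageE image_eqI)

lemma transvection_exists:
  fixes v v' :: "'a::field ^ 'n"
  assumes W: "vec.subspace W" "v \<in> W" "v' \<in> W" and i: "v $ i \<noteq> 0" "v' $ i \<noteq> 0"
  shows "\<exists>f. Vector_Spaces.linear (*s) (*s) f \<and> inj f \<and> f ` W \<subseteq> W \<and> f v = v'"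
proof -
  define f where "f z = z + (z $ i / v $ i) *s (v' - v)" for z
  have "Vector_Spaces.linear (*s) (*s) f"
    unfolding Vector_Spaces.linear_iff f_def
    by (auto simp: vec.vector_space_axioms add_divide_distrib vector_sadd_rdistrib vector_smult_assoc)
  moreover have "inj f"
  proof (rule injI)
    fix z1 z2 assume eq: "f z1 = f z2"
    then have "z1 $ i + (z1 $ i / v $ i) * (v' $ i - v $ i) = z2 $ i + (z2 $ i / v $ i) * (v' $ i - v $ i)"
      unfolding f_def by (metis vector_add_component vector_smult_component vector_minus_component)
    then have "z1 $ i * v' $ i / v $ i = z2 $ i * v' $ i / v $ i"
      using i by (simp add: field_simps)
    then have "z1 $ i = z2 $ i" using i by (simp add: field_simps)
    then show "z1 = z2" using eq unfolding f_def by simp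
  qed
  moreover have "f ` W \<subseteq> W"
    using W by (auto simp: f_def vec.subspace_add vec.subspace_diff vec.subspace_scale)
  moreover have "f v = v'" using i by (simp add: f_def)
  ultimately show ?thesis by blast
qed

lemma subspace_transitive_on_nonzero:
  fixes v v' :: "'a::field ^ 'n"
  assumes W: "vec.subspace W" "v \<in> W" "v' \<in> W" and "v \<noteq> 0" "v' \<noteq> 0"
  shows "\<exists>f. Vector_Spaces.linear (*s) (*s) f \<and> inj f \<and> f ` W \<subseteq> W \<and> f v = v'"
proof (cases "\<exists>i. v $ i \<noteq> 0 \<and> v' $ i \<noteq> 0")
  case True
  then show ?thesis using transvection_exists[OF W] by blast
next
  case False
  obtain i i' where i: "v $ i \<noteq> 0" and i': "v' $ i' \<noteq> 0"
    using assms(4,5) by (metis vec_eq_iff zero_index)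
  then have "v' $ i = 0" "v $ i' = 0" using False by auto
  \<comment> \<open>No coordinate is nonzero in both vectors, so pass through v + v', which shares one with each.\<close>
  moreover have "v + v' \<in> W" using W vec.subspace_add by blast
  ultimately obtain f g where
    f: "Vector_Spaces.linear (*s) (*s) f" "inj f" "f ` W \<subseteq> W" "f v = v + v'" and
    g: "Vector_Spaces.linear (*s) (*s) g" "inj g" "g ` W \<subseteq> W" "g (v + v') = v'"
    using transvection_exists[OF W(1,2), of "v + v'" i] transvection_exists[OF W(1) _ W(3), of "v + v'" i'] i i'
    by auto
  then have "Vector_Spaces.linear (*s) (*s) (g \<circ> f) \<and> inj (g \<circ> f) \<and> (g \<circ> f) ` W \<subseteq> W \<and> (g \<circ> f) v = v'"
    by (auto simp: Vector_Spaces.linear_compose inj_compose image_comp[symmetric] intro: subset_trans)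
  then show ?thesis by blast
qed

lemma card_flats_containing_le_affine_image:
  fixes T A :: "('a::{finite,field} ^ 'n) set"
  assumes f: "Vector_Spaces.linear (*s) (*s) f" "inj f" and T: "(\<lambda>z. c + f z) ` T \<subseteq> T"
  shows "card {R \<in> flats j. R \<subseteq> T \<and> A \<subseteq> R}
    \<le> card {R \<in> flats j. R \<subseteq> T \<and> (\<lambda>z. c + f z) ` A \<subseteq> R}"
proof -
  let ?g = "\<lambda>z. c + f z"
  have "inj ?g" using f(2) by (simp add: inj_def)
  then have "card {R \<in> flats j. R \<subseteq> T \<and> A \<subseteq> R} = card (image ?g ` {R \<in> flats j. R \<subseteq> T \<and> A \<subseteq> R})"
    by (intro card_image[symmetric]) (simp add: inj_on_def inj_image_eq_iff)
  also have "\<dots> \<le> card {R \<in> flats j. R \<subseteq> T \<and> ?g ` A \<subseteq> R}"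
    using T flats_affine_image[OF f] by (intro card_mono) (simp, fastforce)
  finally show ?thesis .
qed

lemma card_flats_containing_pair_le:
  fixes T :: "('a::{finite,field} ^ 'n) set"
  assumes T: "T \<in> flats k" and "x \<in> T" "y \<in> T" "x' \<in> T" "y' \<in> T" and "x = y \<longleftrightarrow> x' = y'"
  shows "card {R \<in> flats j. R \<subseteq> T \<and> x \<in> R \<and> y \<in> R} \<le> card {R \<in> flats j. R \<subseteq> T \<and> x' \<in> R \<and> y' \<in> R}"
proof -
  obtain a W where W: "vec.subspace W" and T_eq: "T = (\<lambda>v. a + v) ` W"
    using T unfolding flats_def by auto
  have diff_in_W: "u - w \<in> W" if "u \<in> T" "w \<in> T" for u w
    using vec.subspace_diff[OF W, of "u - a" "w - a"] that by (simp add: T_eq translation_mem_iff)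
  obtain f where f: "Vector_Spaces.linear (*s) (*s) f" "inj f" "f ` W \<subseteq> W" "f (y - x) = y' - x'"
  proof (cases "x = y")
    case True
    then show ?thesis using that[of id] assms(6) by (simp add: vec.linear_id)
  next
    case False
    then show ?thesis
      using that subspace_transitive_on_nonzero[OF W diff_in_W[OF assms(3,2)] diff_in_W[OF assms(5,4)]]
        assms(6) by auto
  qed
  let ?g = "\<lambda>z. (x' - f x) + f z"
  have "?g z \<in> T" if "z \<in> T" for z
  proof -
    have "?g z - a = (x' - a) + f (z - x)" by (simp add: vec.linear_diff[OF f(1)])
    also have "\<dots> \<in> W"
    proof (rule vec.subspace_add[OF W])
      show "x' - a \<in> W" using assms(4) by (simp add: T_eq translation_mem_iff)
      show "f (z - x) \<in> W" using f(3) diff_in_W[OF that assms(2)] by blast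
    qed
    finally show ?thesis by (simp add: T_eq translation_mem_iff)
  qed
  moreover have "?g y = x' + f (y - x)"
    by (simp add: vec.linear_diff[OF f(1)] algebra_simps)
  then have "?g ` {x, y} = {x', y'}"
    using f(4) by simp
  ultimately show ?thesis
    using card_flats_containing_le_affine_image[OF f(1,2), of "x' - f x" T j "{x, y}"] by auto
qed

lemma card_flats_containing_pair_eq:
  fixes T :: "('a::{finite,field} ^ 'n) set"
  assumes "T \<in> flats k" and "x \<in> T" "y \<in> T" "x' \<in> T" "y' \<in> T" and "x = y \<longleftrightarrow> x' = y'"
  shows "card {R \<in> flats j. R \<subseteq> T \<and> x \<in> R \<and> y \<in> R} = card {R \<in> flats j. R \<subseteq> T \<and> x' \<in> R \<and> y' \<in> R}"
  using card_flats_containing_pair_le[OF assms] card_flats_containing_pair_le[OF assms(1,4,5,2,3)] assms(6)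
  by (simp add: antisym)

lemma card_UNIV_field_ge_2: "2 \<le> CARD('a::{finite,field})"
proof -
  have "card {0, 1 :: 'a} \<le> CARD('a)" by (intro card_mono) auto
  then show ?thesis by simp
qed

lemma expected_mult_power:
  fixes S :: "('a::{finite,field} ^ 'n) set"
  assumes "j \<le> k" "k \<le> CARD('n)"
  shows "expected j S * real CARD('a) ^ (k - j) = expected k S"
proof -
  have "CARD('n) - j = (CARD('n) - k) + (k - j)" using assms by simp
  then show ?thesis
    unfolding expected_def by (simp add: power_add)
qed

lemma flats_within_flat_exists:
  assumes "T \<in> flats k" "j \<le> k"
  shows "\<exists>R \<in> flats j. R \<subseteq> (T :: ('a::field ^ 'n) set)"
proof -
  obtain a W where W: "vec.subspace W" "vec.dim W = k" and T: "T = (\<lambda>v. a + v) ` W"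
    using assms(1) unfolding flats_def by auto
  obtain U where "vec.subspace U" "U \<subseteq> vec.span W" "vec.dim U = j"
    using vec.choose_subspace_of_subspace[of j W] W(2) assms(2) by auto
  moreover have "vec.span W = W" using W(1) by (simp add: vec.span_eq_iff)
  ultimately show ?thesis using T unfolding flats_def by blast
qed


lemma flats_within_flat_variance:
  fixes S T :: "('a::{finite,field} ^ 'n) set" and \<mu> :: real
  assumes T: "T \<in> flats k" and "1 \<le> k" "j \<le> k"
  defines "F \<equiv> {R \<in> flats j. R \<subseteq> T}" and "\<mu> \<equiv> real (card (T \<inter> S)) / real CARD('a) ^ (k - j)"
  shows "(\<Sum>R\<in>F. (real (card (R \<inter> S)) - \<mu>)\<^sup>2) \<le> card F * \<mu>"
proof -
  have q: "2 \<le> CARD('a)" by (rule card_UNIV_field_ge_2)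
  then have "2 \<le> CARD('a) ^ 1" by simp
  also have "\<dots> \<le> CARD('a) ^ k" using assms(2) q by (intro power_increasing) auto
  also have "\<dots> = card T" using card_flats[OF T] by simp
  finally have card_T: "2 \<le> card T" .
  then obtain a b where ab: "a \<in> T" "b \<in> T" "a \<noteq> b"
    using card_le_Suc0_iff_eq[of T] by fastforce
  interpret two_design T F "CARD('a) ^ j" "card {R \<in> F. a \<in> R}" "card {R \<in> F. a \<in> R \<and> b \<in> R}"
  proof
    show "2 \<le> card T" by (fact card_T)
    show "R \<subseteq> T" "card R = CARD('a) ^ j" if "R \<in> F" for R
      using that card_flats unfolding F_def by blast+
    show "card {R \<in> F. x \<in> R} = card {R \<in> F. a \<in> R}" if "x \<in> T" for x
      using card_flats_containing_pair_eq[OF T that that ab(1) ab(1)] unfolding F_def by (simp add: conj_assoc)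
    show "card {R \<in> F. x \<in> R \<and> y \<in> R} = card {R \<in> F. a \<in> R \<and> b \<in> R}"
      if "x \<in> T" "y \<in> T" "x \<noteq> y" for x y
      using card_flats_containing_pair_eq[OF T that(1,2) ab(1,2)] that(3) ab(3)
      unfolding F_def by (simp add: conj_assoc)
  qed
  have "real (card T) = real CARD('a) ^ j * real CARD('a) ^ (k - j)"
    using card_flats[OF T] assms(3) by (simp flip: power_add)
  then have "real (card (T \<inter> S)) * real (CARD('a) ^ j) / card T = \<mu>"
    unfolding \<mu>_def by simp
  moreover have "R \<inter> (T \<inter> S) = R \<inter> S" if "R \<in> F" for R
    using that unfolding F_def by auto
  ultimately show ?thesis
    using intersection_variance_le[of "T \<inter> S"] by simp
qed

lemma unbalanced_mean_far_from_expected: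
  fixes S T :: "('a::{finite,field} ^ 'n) set"
  assumes "\<not> balanced \<tau> S k T" "j \<le> k" "k \<le> CARD('n)"
  shows "\<tau> * expected j S < \<bar>real (card (T \<inter> S)) / real CARD('a) ^ (k - j) - expected j S\<bar>"
proof -
  define q where "q = real CARD('a) ^ (k - j)"
  define \<mu> where "\<mu> = real (card (T \<inter> S)) / q"
  have "0 < q" unfolding q_def by simp
  have "expected k S = expected j S * q"
    using expected_mult_power[OF assms(2,3), of S] unfolding q_def by simp
  moreover have "real (card (T \<inter> S)) - expected j S * q = (\<mu> - expected j S) * q"
    using \<open>0 < q\<close> unfolding \<mu>_def by (simp add: field_simps)
  ultimately have "\<tau> * expected j S * q < \<bar>\<mu> - expected j S\<bar> * q"
    using assms(1) \<open>0 < q\<close> unfolding balanced_def by (simp add: abs_mult mult.assoc)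
  then show ?thesis unfolding \<mu>_def q_def by (rule mult_right_less_imp_less) simp
qed

lemma card_balanced_subflats_le:
  fixes S T :: "('a::{finite,field} ^ 'n) set" and \<sigma> \<tau> c :: real
  assumes T: "T \<in> flats k" "\<not> balanced \<tau> S k T" and jk: "1 \<le> k" "j \<le> k" "k \<le> CARD('n)"
    and "0 \<le> \<sigma>" "\<sigma> < \<tau>" and c: "0 < c" "c \<le> expected j S"
  shows "card {R \<in> flats j. R \<subseteq> T \<and> balanced \<sigma> S j R}
    \<le> card {R \<in> flats j. R \<subseteq> T} * ((1 + \<tau>) / ((\<tau> - \<sigma>)\<^sup>2 * c))"
proof -
  define F where "F = {R \<in> flats j. R \<subseteq> T}"
  define Bal where "Bal = {R \<in> flats j. R \<subseteq> T \<and> balanced \<sigma> S j R}"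
  define E where "E = expected j S"
  define \<mu> where "\<mu> = real (card (T \<inter> S)) / real CARD('a) ^ (k - j)"
  define \<delta> where "\<delta> = \<bar>\<mu> - E\<bar> - \<sigma> * E"
  define C where "C = (1 + \<tau>) / ((\<tau> - \<sigma>)\<^sup>2 * c)"
  have far: "\<tau> * E < \<bar>\<mu> - E\<bar>"
    using unbalanced_mean_far_from_expected[OF T(2) jk(2,3)] unfolding E_def \<mu>_def .
  have "0 \<le> \<mu>" unfolding \<mu>_def by simp
  then have dev: "\<mu> * ((\<tau> - \<sigma>)\<^sup>2 * c) \<le> (1 + \<tau>) * \<delta>\<^sup>2"
    using unbalanced_mean_deviation[OF c[unfolded E_def[symmetric]] assms(6,7) _ far]
    unfolding \<delta>_def by (simp add: mult.assoc)
  have "\<sigma> * E < \<tau> * E" using assms(7) c unfolding E_def by simp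
  then have "0 < \<delta>" using far unfolding \<delta>_def by simp
  have "card Bal * \<delta>\<^sup>2 \<le> (\<Sum>R\<in>F. (real (card (R \<inter> S)) - \<mu>)\<^sup>2)"
  proof (rule card_mult_sq_le_sum_sq_deviation)
    show "\<delta> \<le> \<bar>real (card (R \<inter> S)) - \<mu>\<bar>" if "R \<in> Bal" for R
      using that unfolding Bal_def balanced_def \<delta>_def E_def by (simp, arith)
  qed (use \<open>0 < \<delta>\<close> in \<open>auto simp: Bal_def F_def\<close>)
  also have "\<dots> \<le> card F * \<mu>"
    using flats_within_flat_variance[OF T(1) jk(1,2), of S] unfolding F_def \<mu>_def .
  also have "\<dots> \<le> card F * (C * \<delta>\<^sup>2)"
    using dev c assms(7) unfolding C_def by (intro mult_left_mono) (simp_all add: pos_le_divide_eq)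
  finally have "card Bal * \<delta>\<^sup>2 \<le> (card F * C) * \<delta>\<^sup>2" by (simp add: mult.assoc)
  then have "card Bal \<le> card F * C"
    by (rule mult_right_le_imp_le) (use \<open>0 < \<delta>\<close> in simp)
  then show ?thesis unfolding F_def Bal_def C_def .
qed

theorem mainTheorem11:
  fixes S T :: "('a::{finite,field} ^ 'n) set" and \<sigma> \<tau> :: real and k :: nat
  assumes "0 < \<sigma>" and "\<sigma> < \<tau>" and "3 \<le> k" and "k \<le> CARD('n)"
    and "expected (k - 2) S \<ge> real CARD('a)"
    and "T \<in> flats k" and "\<not> balanced \<tau> S k T"
  shows "real (card {R \<in> flats (k - 2). R \<subseteq> T \<and> \<not> balanced \<sigma> S (k - 2) R})
           / real (card {R \<in> flats (k - 2). R \<subseteq> T})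
         \<ge> 1 - (1 + \<tau>) / ((\<tau> - \<sigma>)\<^sup>2 * real CARD('a))"
proof -
  define F where "F = {R \<in> flats (k - 2). R \<subseteq> T}"
  define Bal where "Bal = {R \<in> flats (k - 2). R \<subseteq> T \<and> balanced \<sigma> S (k - 2) R}"
  define C where "C = (1 + \<tau>) / ((\<tau> - \<sigma>)\<^sup>2 * real CARD('a))"
  have "card Bal \<le> card F * C"
    using card_balanced_subflats_le[OF assms(6,7) _ _ assms(4), of "k - 2" \<sigma> "real CARD('a)"]
      assms(1-3,5) card_UNIV_field_ge_2[where 'a = 'a]
    unfolding F_def Bal_def C_def by simp
  moreover have "card F > 0"
    using flats_within_flat_exists[OF assms(6), of "k - 2"] unfolding F_def by (auto simp: card_gt_0_iff)
  ultimately have "card Bal / card F \<le> C" by (simp add: pos_divide_le_eq mult.commute)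
  moreover have "{R \<in> flats (k - 2). R \<subseteq> T \<and> \<not> balanced \<sigma> S (k - 2) R} = F - Bal"
    unfolding F_def Bal_def by auto
  moreover have "Bal \<subseteq> F" unfolding F_def Bal_def by auto
  then have "real (card (F - Bal)) / card F = 1 - card Bal / card F"
    using \<open>card F > 0\<close> by (simp add: card_Diff_subset card_mono card_gt_0_iff of_nat_diff diff_divide_distrib)
  ultimately show ?thesis unfolding F_def[symmetric] C_def[symmetric] by simp
qed

end
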